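(* Let $\{q_n:n\in\mathbb N\}$ be an enumeration of $\mathbb Q\cap[0,1]$. For $n\in\mathbb N$ let $f_n:[0,1]\to[-1,1]$, $f_n(x)=\sin\frac{1}{x-q_n}$ for $x\ne q_n$ and $f_n(q_n)=0$, and let $f(x)=\sum_{n=1}^\infty 2^{-n}f_n(x)$. Let $X=[0,1]\times[-1,1]$ and $E=\{(x,y)\in X: y=f(x)\}$. Then $E$ is connected, $E$ is an $H_1$-retract of $X$, but $E$ is not a $B_1$-retract of $X$.
   Context: A function $f:X\to Y$ between topological spaces is a Baire-one function if it is the pointwise limit of a sequence of continuous functions $f_n:X\to Y$; it is a Lebesgue-one function if $f^{-1}(F)$ is a $G_\delta$-set in $X$ for every closed $F\subseteq Y$. A subset $E$ of $X$ (with the subspace topology) is a $B_1$-retract (resp. $H_1$-retract) of $X$ if there exists a Baire-one (resp. Lebesgue-one) function $r:X\to E$ with $r(x)=x$ for all $x\in E$. *)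

theory Defs
  imports "HOL-Analysis.Analysis"
begin

definition baire_one_map :: "'a topology \<Rightarrow> 'b topology \<Rightarrow> ('a \<Rightarrow> 'b) \<Rightarrow> bool" where
  "baire_one_map X Y f \<longleftrightarrow>
     (\<exists>g :: nat \<Rightarrow> 'a \<Rightarrow> 'b. (\<forall>n. continuous_map X Y (g n)) \<and>
        (\<forall>x\<in>topspace X. limitin Y (\<lambda>n. g n x) (f x) sequentially))"

definition lebesgue_one_map :: "'a topology \<Rightarrow> 'b topology \<Rightarrow> ('a \<Rightarrow> 'b) \<Rightarrow> bool" where
  "lebesgue_one_map X Y f \<longleftrightarrow>
     f \<in> topspace X \<rightarrow> topspace Y \<and>
     (\<forall>F. closedin Y F \<longrightarrow> gdelta_in X {x \<in> topspace X. f x \<in> F})"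

definition B1_retract :: "'a topology \<Rightarrow> 'a set \<Rightarrow> bool" where
  "B1_retract X E \<longleftrightarrow> E \<subseteq> topspace X \<and>
     (\<exists>r. baire_one_map X (subtopology X E) r \<and> (\<forall>x\<in>E. r x = x))"

definition H1_retract :: "'a topology \<Rightarrow> 'a set \<Rightarrow> bool" where
  "H1_retract X E \<longleftrightarrow> E \<subseteq> topspace X \<and>
     (\<exists>r. lebesgue_one_map X (subtopology X E) r \<and> (\<forall>x\<in>E. r x = x))"

end

theory Submission
  imports Defs
begin

(*
  The function f is continuous at every irrational point, and near q k it is the sum of
  2^-k sin (1 / (x - q k)) and a function continuous at q k. Evaluating along the zeros
  q k \<plusminus> 1 / (j \<pi>) of the oscillating summand shows that f x is a one-sided cluster value of f
  at every x; evaluating along its peaks shows that f (q k) + 2^-k is a cluster value as well.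

  Connectedness: a splitting of the graph into two relatively open sets induces a labelling of
  [0,1] that is locally constant off a countable closed set; by the one-sided clustering an
  isolated point of that set is not exceptional, so the set is empty and the labelling constant.

  H1: the retraction (x, y) \<mapsto> (x, f x) is continuous off the vertical lines over the rationals
  and constant on each of them, so the preimage of a closed set is a closed set minus a countable
  union of closed sets, hence a G-delta set.

  Not B1: a continuum in the graph projects onto an interval; if that interval were nondegenerate
  it would contain some q k, and closedness would put (q k, f (q k) + 2^-k) on the graph. Hence
  every continuous map from the square into the graph is constant, and a pointwise limit of
  constant maps cannot fix two distinct points.
*)

lemma countable_closed_has_isolated_point:
  fixes K :: "'a::complete_space set"
  assumes "closed K" "countable K" "K \<noteq> {}"
  obtains k where "k \<in> K" "\<not> k islimpt K"
proof -
  have "euclidean derived_set_of K \<noteq> K"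
  proof
    assume "euclidean derived_set_of K = K"
    then have "(UNIV::real set) \<lesssim> K"
      using lepoll_perfect_set completely_metrizable_space_euclidean assms(3) by blast
    then show False
      using countable_lepoll uncountable_UNIV_real assms(2) by blast
  qed
  moreover have "euclidean derived_set_of K \<subseteq> K"
    using assms(1) by (metis closedin_contains_derived_set closed_closedin)
  ultimately obtain k where "k \<in> K" "k \<notin> euclidean derived_set_of K"
    by blast
  then show thesis
    using that by (auto simp: in_derived_set_of islimpt_def)
qed

lemma connected_locally_constant_eq:
  assumes "connected J" "\<And>y. y \<in> J \<Longrightarrow> \<forall>\<^sub>F z in at y within J. h y = h z"
    and "\<exists>\<^sub>F z in F. z \<in> J \<and> h z = c" "y \<in> J"
  shows "h y = c"
proof -
  obtain z where "z \<in> J" "h z = c"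
    using frequently_ex[OF assms(3)] by blast
  moreover have "h y = h z"
    by (rule connected_local_const[OF assms(1,4) \<open>z \<in> J\<close>]) (use assms(2) in blast)
  ultimately show ?thesis by simp
qed

lemma constant_near_if_frequently_constant_sides:
  fixes h :: "real \<Rightarrow> 'b"
  assumes "\<rho> > 0" "k \<in> {a..b}"
    and loc: "\<And>y. y \<in> {a..b} \<Longrightarrow> y \<noteq> k \<Longrightarrow> dist y k < \<rho> \<Longrightarrow>
      \<forall>\<^sub>F z in at y within {a..b}. h y = h z"
    and left: "a < k \<Longrightarrow> \<exists>\<^sub>F y in at_left k. h y = h k"
    and right: "k < b \<Longrightarrow> \<exists>\<^sub>F y in at_right k. h y = h k"
    and "y \<in> {a..b}" "dist y k < \<rho>"
  shows "h y = h k"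
proof -
  define L where "L = {k - \<rho><..<k} \<inter> {a..b}"
  define R where "R = {k<..<k + \<rho>} \<inter> {a..b}"
  have loc_within: "\<forall>\<^sub>F z in at y within J. h y = h z"
    if "y \<in> J" "J \<subseteq> {a..b} \<inter> ball k \<rho> - {k}" for y J
  proof -
    have "J \<subseteq> {a..b}"
      using that by auto
    moreover have "\<forall>\<^sub>F z in at y within {a..b}. h y = h z"
      using that by (intro loc) (auto simp: dist_commute)
    ultimately show ?thesis
      by (rule filter_leD[OF at_le])
  qed
  have "h y = h k" if "y \<in> L"
  proof (rule connected_locally_constant_eq[OF _ _ _ that])
    show "connected L"
      unfolding L_def by (intro convex_connected convex_Int convex_real_interval)
    show "\<forall>\<^sub>F z in at y within L. h y = h z" if "y \<in> L" for y
      using that by (intro loc_within) (auto simp: L_def dist_real_def)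
    have "a < k"
      using that by (auto simp: L_def)
    have "\<forall>\<^sub>F z in at_left k. z \<in> {max (k - \<rho>) a<..<k}"
      using \<open>a < k\<close> \<open>\<rho> > 0\<close> by (intro eventually_at_left_real) auto
    then have "\<forall>\<^sub>F z in at_left k. z \<in> L"
      by eventually_elim (use \<open>k \<in> {a..b}\<close> in \<open>auto simp: L_def\<close>)
    then show "\<exists>\<^sub>F z in at_left k. z \<in> L \<and> h z = h k"
      using frequently_eventually_conj[OF left[OF \<open>a < k\<close>]] by blast
  qed
  moreover have "h y = h k" if "y \<in> R"
  proof (rule connected_locally_constant_eq[OF _ _ _ that])
    show "connected R"
      unfolding R_def by (intro convex_connected convex_Int convex_real_interval)
    show "\<forall>\<^sub>F z in at y within R. h y = h z" if "y \<in> R" for y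
      using that by (intro loc_within) (auto simp: R_def dist_real_def)
    have "k < b"
      using that by (auto simp: R_def)
    have "\<forall>\<^sub>F z in at_right k. z \<in> {k<..<min (k + \<rho>) b}"
      using \<open>k < b\<close> \<open>\<rho> > 0\<close> by (intro eventually_at_right_real) auto
    then have "\<forall>\<^sub>F z in at_right k. z \<in> R"
      by eventually_elim (use \<open>k \<in> {a..b}\<close> in \<open>auto simp: R_def\<close>)
    then show "\<exists>\<^sub>F z in at_right k. z \<in> R \<and> h z = h k"
      using frequently_eventually_conj[OF right[OF \<open>k < b\<close>]] by blast
  qed
  ultimately show ?thesis
    using assms(6,7) by (cases y k rule: linorder_cases) (auto simp: L_def R_def dist_real_def)
qed

lemma interval_constant_if_locally_constant_off_countable:
  fixes h :: "real \<Rightarrow> 'b"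
  assumes "countable C"
    and loc: "\<And>x. x \<in> {a..b} - C \<Longrightarrow> \<forall>\<^sub>F y in at x within {a..b}. h y = h x"
    and left: "\<And>x. x \<in> {a..b} \<Longrightarrow> a < x \<Longrightarrow> \<exists>\<^sub>F y in at_left x. h y = h x"
    and right: "\<And>x. x \<in> {a..b} \<Longrightarrow> x < b \<Longrightarrow> \<exists>\<^sub>F y in at_right x. h y = h x"
    and "x \<in> {a..b}" "y \<in> {a..b}"
  shows "h x = h y"
proof -
  define V where "V = \<Union>{S. open S \<and> (\<forall>y\<in>S \<inter> {a..b}. \<forall>z\<in>S \<inter> {a..b}. h y = h z)}"
  have V_local: "\<forall>\<^sub>F z in at y within {a..b}. h y = h z" if "y \<in> V" "y \<in> {a..b}" for y
    using that unfolding V_def eventually_at_topological by blast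
  have loc_V: "x \<in> V" if x: "x \<in> {a..b} - C" for x
  proof -
    obtain S where "open S" "x \<in> S" "\<forall>y\<in>S. y \<noteq> x \<longrightarrow> y \<in> {a..b} \<longrightarrow> h y = h x"
      using loc[OF x] unfolding eventually_at_topological by blast
    then show ?thesis
      using x unfolding V_def by (intro UnionI[of S]) (auto, metis)
  qed
  \<comment> \<open>An isolated point of the closed countable complement of V would lie in V.\<close>
  have "{a..b} - V = {}"
  proof (rule ccontr)
    assume "{a..b} - V \<noteq> {}"
    moreover have "closed ({a..b} - V)"
      unfolding V_def by (intro closed_Diff) auto
    moreover have "countable ({a..b} - V)"
      using loc_V by (intro countable_subset[OF _ \<open>countable C\<close>]) force
    ultimately obtain k where k: "k \<in> {a..b}" "k \<notin> V" and "\<not> k islimpt ({a..b} - V)"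
      using countable_closed_has_isolated_point by blast
    then obtain \<rho> where "\<rho> > 0" and isolated: "\<And>y. y \<in> {a..b} \<Longrightarrow> y \<notin> V \<Longrightarrow> dist y k < \<rho> \<Longrightarrow> y = k"
      unfolding islimpt_approachable by (metis Diff_iff dist_commute)
    have "h y = h k" if "y \<in> ball k \<rho> \<inter> {a..b}" for y
      using that isolated V_local left[OF k(1)] right[OF k(1)]
      by (intro constant_near_if_frequently_constant_sides[OF \<open>\<rho> > 0\<close> k(1)]) (auto simp: dist_commute)
    then have "ball k \<rho> \<subseteq> V"
      unfolding V_def by (intro Union_upper) auto
    with k \<open>\<rho> > 0\<close> show False
      using centre_in_ball by blast
  qed
  then show ?thesis
    using V_local by (intro connected_local_const[OF _ assms(5,6)]) auto
qed

lemma interval_constant_if_graph_locally_constant: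
  fixes f :: "real \<Rightarrow> real" and h :: "real \<Rightarrow> 'b"
  assumes "countable C"
    and cont: "\<And>x. x \<in> {a..b} - C \<Longrightarrow> isCont f x"
    and left: "\<And>x e. x \<in> {a..b} \<Longrightarrow> a < x \<Longrightarrow> e > 0 \<Longrightarrow> \<exists>\<^sub>F y in at_left x. dist (f y) (f x) < e"
    and right: "\<And>x e. x \<in> {a..b} \<Longrightarrow> x < b \<Longrightarrow> e > 0 \<Longrightarrow> \<exists>\<^sub>F y in at_right x. dist (f y) (f x) < e"
    and graph_local: "\<And>x. x \<in> {a..b} \<Longrightarrow> \<exists>\<epsilon>>0. \<forall>y\<in>{a..b}. dist (y, f y) (x, f x) < \<epsilon> \<longrightarrow> h y = h x"
    and "x \<in> {a..b}" "y \<in> {a..b}"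
  shows "h x = h y"
proof (rule interval_constant_if_locally_constant_off_countable[where h = h, OF \<open>countable C\<close> _ _ _ assms(6,7)])
  show "\<forall>\<^sub>F y in at x within {a..b}. h y = h x" if x: "x \<in> {a..b} - C" for x
  proof -
    obtain \<epsilon> where "\<epsilon> > 0" and \<epsilon>: "\<forall>y\<in>{a..b}. dist (y, f y) (x, f x) < \<epsilon> \<longrightarrow> h y = h x"
      using graph_local x by blast
    have "isCont (\<lambda>y. (y, f y)) x"
      by (rule continuous_Pair[OF continuous_ident cont[OF x]])
    then have "((\<lambda>y. (y, f y)) \<longlongrightarrow> (x, f x)) (at x within {a..b})"
      using continuous_at_imp_continuous_at_within continuous_within by blast
    then have "\<forall>\<^sub>F y in at x within {a..b}. dist (y, f y) (x, f x) < \<epsilon>"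
      using \<open>\<epsilon> > 0\<close> by (rule tendstoD)
    then show ?thesis
      unfolding eventually_at_filter by eventually_elim (use \<epsilon> in auto)
  qed
  have frequently_h: "\<exists>\<^sub>F y in F. h y = h x"
    if x: "x \<in> {a..b}" and ev: "\<And>e. e > 0 \<Longrightarrow> \<forall>\<^sub>F y in F. y \<in> {a..b} \<and> dist y x < e"
      and fr: "\<And>e. e > 0 \<Longrightarrow> \<exists>\<^sub>F y in F. dist (f y) (f x) < e" for F x
  proof -
    obtain \<epsilon> where "\<epsilon> > 0" and \<epsilon>: "\<forall>y\<in>{a..b}. dist (y, f y) (x, f x) < \<epsilon> \<longrightarrow> h y = h x"
      using graph_local x by blast
    have close: "dist (y, f y) (x, f x) < \<epsilon>" if "dist y x < \<epsilon>/2" "dist (f y) (f x) < \<epsilon>/2" for y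
      unfolding dist_Pair_Pair using that by (intro sqrt_sum_squares_half_less) auto
    have "\<exists>\<^sub>F y in F. dist (f y) (f x) < \<epsilon>/2 \<and> y \<in> {a..b} \<and> dist y x < \<epsilon>/2"
      using \<open>\<epsilon> > 0\<close> by (intro frequently_eventually_frequently fr ev) auto
    then show ?thesis
      by (rule frequently_elim1) (use \<epsilon> close in blast)
  qed
  show "\<exists>\<^sub>F y in at_left x. h y = h x" if "x \<in> {a..b}" "a < x" for x
  proof (rule frequently_h[OF that(1) _ left[OF that]])
    show "\<forall>\<^sub>F y in at_left x. y \<in> {a..b} \<and> dist y x < e" if "e > 0" for e
      using eventually_at_left_real[of "max (x - e) a" x] \<open>e > 0\<close> \<open>x \<in> {a..b}\<close> \<open>a < x\<close>
      by (auto simp: dist_real_def elim!: eventually_mono)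
  qed
  show "\<exists>\<^sub>F y in at_right x. h y = h x" if "x \<in> {a..b}" "x < b" for x
  proof (rule frequently_h[OF that(1) _ right[OF that]])
    show "\<forall>\<^sub>F y in at_right x. y \<in> {a..b} \<and> dist y x < e" if "e > 0" for e
      using eventually_at_right_real[of x "min (x + e) b"] \<open>e > 0\<close> \<open>x \<in> {a..b}\<close> \<open>x < b\<close>
      by (auto simp: dist_real_def elim!: eventually_mono)
  qed
qed

lemma connected_graph_if_continuous_off_countable:
  fixes f :: "real \<Rightarrow> real"
  assumes "countable C"
    and cont: "\<And>x. x \<in> {a..b} - C \<Longrightarrow> isCont f x"
    and left: "\<And>x e. x \<in> {a..b} \<Longrightarrow> a < x \<Longrightarrow> e > 0 \<Longrightarrow> \<exists>\<^sub>F y in at_left x. dist (f y) (f x) < e"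
    and right: "\<And>x e. x \<in> {a..b} \<Longrightarrow> x < b \<Longrightarrow> e > 0 \<Longrightarrow> \<exists>\<^sub>F y in at_right x. dist (f y) (f x) < e"
  shows "connected ((\<lambda>x. (x, f x)) ` {a..b})"
proof (rule connectedI)
  fix A B :: "(real \<times> real) set"
  let ?G = "(\<lambda>x. (x, f x)) ` {a..b}"
  assume "open A" "open B" "A \<inter> ?G \<noteq> {}" "B \<inter> ?G \<noteq> {}" "A \<inter> B \<inter> ?G = {}" "?G \<subseteq> A \<union> B"
  define h where "h x \<longleftrightarrow> (x, f x) \<in> A" for x
  have graph_local: "\<exists>\<epsilon>>0. \<forall>y\<in>{a..b}. dist (y, f y) (x, f x) < \<epsilon> \<longrightarrow> h y = h x"
    if "x \<in> {a..b}" for x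
  proof (cases "h x")
    case True
    then obtain \<epsilon> where "\<epsilon> > 0" "ball (x, f x) \<epsilon> \<subseteq> A"
      using \<open>open A\<close> open_contains_ball unfolding h_def by blast
    then show ?thesis
      using True by (intro exI[of _ \<epsilon>]) (auto simp: h_def dist_commute)
  next
    case False
    then have "(x, f x) \<in> B"
      using that \<open>?G \<subseteq> A \<union> B\<close> unfolding h_def by blast
    then obtain \<epsilon> where "\<epsilon> > 0" and \<epsilon>: "ball (x, f x) \<epsilon> \<subseteq> B"
      using \<open>open B\<close> open_contains_ball by blast
    have "\<not> h y" if "y \<in> {a..b}" "dist (y, f y) (x, f x) < \<epsilon>" for y
    proof -
      have "(y, f y) \<in> B \<inter> ?G"
        using that \<epsilon> by (auto simp: dist_commute)
      then show ?thesis
        using \<open>A \<inter> B \<inter> ?G = {}\<close> unfolding h_def by blast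
    qed
    then show ?thesis
      using False \<open>\<epsilon> > 0\<close> by blast
  qed
  have const: "h x = h y" if "x \<in> {a..b}" "y \<in> {a..b}" for x y
    using assms graph_local that by (rule interval_constant_if_graph_locally_constant)
  obtain x y where "x \<in> {a..b}" "(x, f x) \<in> A" "y \<in> {a..b}" "(y, f y) \<in> B"
    using \<open>A \<inter> ?G \<noteq> {}\<close> \<open>B \<inter> ?G \<noteq> {}\<close> by blast
  moreover have "(y, f y) \<notin> A"
    using calculation \<open>A \<inter> B \<inter> ?G = {}\<close> by blast
  ultimately show False
    using const unfolding h_def by blast
qed

lemma gdelta_in_preimage_if_continuous_off_pieces:
  fixes \<phi> :: "'a::metric_space \<Rightarrow> 'b::metric_space"
  assumes "countable \<D>" "\<And>D. D \<in> \<D> \<Longrightarrow> closed D"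
    and const: "\<And>D p p'. D \<in> \<D> \<Longrightarrow> p \<in> D \<inter> X \<Longrightarrow> p' \<in> D \<inter> X \<Longrightarrow> \<phi> p = \<phi> p'"
    and cont: "\<And>p. p \<in> X - \<Union>\<D> \<Longrightarrow> continuous (at p within X) \<phi>"
    and "closed T"
  shows "gdelta_in (top_of_set X) {p \<in> X. \<phi> p \<in> T}"
proof -
  define S where "S = {p \<in> X. \<phi> p \<in> T}"
  define \<D>' where "\<D>' = (\<lambda>D. X \<inter> D) ` {D \<in> \<D>. D \<inter> S = {}}"
  have "X \<inter> closure S - \<Union>\<D>' \<subseteq> S"
  proof
    fix p assume p: "p \<in> X \<inter> closure S - \<Union>\<D>'"
    show "p \<in> S"
    proof (cases "p \<in> \<Union>\<D>")
      case True
      then obtain D where "D \<in> \<D>" "p \<in> D" by blast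
      moreover from this obtain p' where "p' \<in> D \<inter> S"
        using p unfolding \<D>'_def by blast
      ultimately show ?thesis
        using const[of D p p'] p by (auto simp: S_def)
    next
      case False
      have "p \<in> closure S"
        using p by blast
      then obtain s where s: "\<And>n. s n \<in> S" "s \<longlonglongrightarrow> p"
        unfolding closure_sequential by blast
      have "(\<phi> \<circ> s) \<longlonglongrightarrow> \<phi> p"
        using cont[of p] p False s unfolding continuous_within_sequentially S_def by blast
      then have "\<phi> p \<in> T"
        using s(1) closed_sequentially[OF \<open>closed T\<close>, of "\<phi> \<circ> s"] by (simp add: S_def)
      then show ?thesis
        using p by (simp add: S_def)
    qed
  qed
  moreover have "S \<subseteq> X \<inter> closure S"
    using closure_subset[of S] by (auto simp: S_def)
  moreover have "S \<inter> \<Union>\<D>' = {}"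
    unfolding \<D>'_def by auto
  ultimately have "S = X \<inter> closure S - \<Union>\<D>'"
    by blast
  moreover have "gdelta_in (top_of_set X) (X \<inter> closure S)"
    by (intro closed_imp_gdelta_in metrizable_space_subtopology metrizable_space_euclidean
        closedin_closed_Int closed_closure)
  moreover have "fsigma_in (top_of_set X) (\<Union>\<D>')"
    unfolding \<D>'_def using assms(1,2)
    by (intro fsigma_in_Union closed_imp_fsigma_in) (auto intro: closedin_closed_Int)
  ultimately show ?thesis
    unfolding S_def by (metis gdelta_in_diff)
qed

lemma lebesgue_one_map_if_continuous_off_pieces:
  fixes \<phi> :: "'a::metric_space \<Rightarrow> 'b::metric_space"
  assumes "\<phi> ` X \<subseteq> E" "countable \<D>" "\<And>D. D \<in> \<D> \<Longrightarrow> closed D"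
    and "\<And>D p p'. D \<in> \<D> \<Longrightarrow> p \<in> D \<inter> X \<Longrightarrow> p' \<in> D \<inter> X \<Longrightarrow> \<phi> p = \<phi> p'"
    and "\<And>p. p \<in> X - \<Union>\<D> \<Longrightarrow> continuous (at p within X) \<phi>"
  shows "lebesgue_one_map (top_of_set X) (top_of_set E) \<phi>"
  unfolding lebesgue_one_map_def
proof (intro conjI allI impI)
  show "\<phi> \<in> topspace (top_of_set X) \<rightarrow> topspace (top_of_set E)"
    using assms(1) by auto
  fix F assume "closedin (top_of_set E) F"
  then obtain T where "closed T" "F = E \<inter> T"
    by (auto simp: closedin_closed)
  then have "{p \<in> topspace (top_of_set X). \<phi> p \<in> F} = {p \<in> X. \<phi> p \<in> T}"
    using assms(1) by auto
  moreover have "gdelta_in (top_of_set X) {p \<in> X. \<phi> p \<in> T}"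
    by (rule gdelta_in_preimage_if_continuous_off_pieces[OF assms(2-5) \<open>closed T\<close>])
  ultimately show "gdelta_in (top_of_set X) {p \<in> topspace (top_of_set X). \<phi> p \<in> F}"
    by (simp only:)
qed

lemma graph_points_eq_if_compact_connected:
  fixes f :: "real \<Rightarrow> real"
  assumes "compact K" "connected K" "K \<subseteq> (\<lambda>x. (x, f x)) ` S"
    and jump: "\<And>a b. a \<in> S \<Longrightarrow> b \<in> S \<Longrightarrow> a < b \<Longrightarrow>
      \<exists>c s L. a < c \<and> c < b \<and> s \<longlonglongrightarrow> c \<and> (\<lambda>j. f (s j)) \<longlonglongrightarrow> L \<and> L \<noteq> f c"
    and "p \<in> K" "p' \<in> K"
  shows "p = p'"
proof -
  have on_graph: "p = (fst p, f (fst p))" "fst p \<in> S" if "p \<in> K" for p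
    using that assms(3) by auto
  have graph_fst: "(x, f x) \<in> K" if "x \<in> fst ` K" for x
    using that on_graph(1) by force
  have "\<not> fst p < fst p'" if pK: "p \<in> K" "p' \<in> K" for p p'
  proof
    assume lt: "fst p < fst p'"
    then obtain c s L where c: "fst p < c" "c < fst p'" and s: "s \<longlonglongrightarrow> c"
      and L: "(\<lambda>j. f (s j)) \<longlonglongrightarrow> L" "L \<noteq> f c"
      using jump[OF on_graph(2)[OF pK(1)] on_graph(2)[OF pK(2)] lt] by blast
    have sub: "{fst p..fst p'} \<subseteq> fst ` K"
      using pK by (intro connected_contains_Icc connected_continuous_image[OF continuous_on_fst] assms(2))
        auto
    have "\<forall>\<^sub>F j in sequentially. s j \<in> {fst p..fst p'}"
      using order_tendstoD(1)[OF s c(1)] order_tendstoD(2)[OF s c(2)]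
      by eventually_elim auto
    then have "\<forall>\<^sub>F j in sequentially. (s j, f (s j)) \<in> K"
      by eventually_elim (use sub graph_fst in blast)
    moreover have "(\<lambda>j. (s j, f (s j))) \<longlonglongrightarrow> (c, L)"
      using s L(1) by (rule tendsto_Pair)
    ultimately have "(c, L) \<in> K"
      using compact_imp_closed[OF assms(1)] by (intro Lim_in_closed_set) auto
    then show False
      using on_graph(1) L(2) by fastforce
  qed
  then have "fst p = fst p'"
    using assms(5,6) by (meson linorder_neqE)
  then show ?thesis
    using on_graph(1)[OF assms(5)] on_graph(1)[OF assms(6)] by simp
qed

lemma not_B1_retract_if_continuous_maps_constant:
  assumes "Hausdorff_space X" "a \<in> E" "b \<in> E" "a \<noteq> b"
    and const: "\<And>g. continuous_map X (subtopology X E) g \<Longrightarrow> g a = g b"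
  shows "\<not> B1_retract X E"
proof
  assume "B1_retract X E"
  then obtain r g where "E \<subseteq> topspace X" and r: "\<And>x. x \<in> E \<Longrightarrow> r x = x"
    and g: "\<And>n. continuous_map X (subtopology X E) (g n)"
    and lim: "\<And>x. x \<in> topspace X \<Longrightarrow> limitin (subtopology X E) (\<lambda>n. g n x) (r x) sequentially"
    unfolding B1_retract_def baire_one_map_def by blast
  have "limitin (subtopology X E) (\<lambda>n. g n a) a sequentially"
    using lim[of a] r[of a] assms(2) \<open>E \<subseteq> topspace X\<close> by auto
  moreover have "limitin (subtopology X E) (\<lambda>n. g n a) b sequentially"
    using lim[of b] r[of b] assms(3) \<open>E \<subseteq> topspace X\<close> const[OF g] by auto
  moreover have "Hausdorff_space (subtopology X E)"
    using assms(1) by (rule Hausdorff_space_subtopology)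
  ultimately show False
    using assms(4) limitin_Hausdorff_unique by fastforce
qed

lemma frequently_if_filterlim_sequentially:
  assumes "filterlim s F sequentially" "\<forall>\<^sub>F j in sequentially. P (s j)"
  shows "\<exists>\<^sub>F y in F. P y"
  unfolding frequently_def
proof
  assume "\<forall>\<^sub>F y in F. \<not> P y"
  then have "\<forall>\<^sub>F j in sequentially. \<not> P (s j)"
    using assms(1) by (rule eventually_compose_filterlim)
  with assms(2) have "\<forall>\<^sub>F j in sequentially. False"
    by eventually_elim simp
  then show False
    by simp
qed

lemma isCont_suminf_bounded:
  fixes u :: "nat \<Rightarrow> 'a::t2_space \<Rightarrow> real"
  assumes "\<And>m y. \<bar>u m y\<bar> \<le> M m" "summable M" "\<And>m. isCont (u m) x"
  shows "isCont (\<lambda>y. \<Sum>m. u m y) x"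
proof -
  have "uniform_limit UNIV (\<lambda>n y. \<Sum>m<n. u m y) (\<lambda>y. \<Sum>m. u m y) sequentially"
    by (rule Weierstrass_m_test) (use assms in auto)
  moreover have "\<forall>\<^sub>F n in sequentially. ((\<lambda>y. \<Sum>m<n. u m y) \<longlongrightarrow> (\<Sum>m<n. u m x)) (at x)"
    using assms(3) by (intro always_eventually allI tendsto_sum) (simp add: isCont_def)
  moreover have "summable (\<lambda>m. u m x)"
    by (rule summable_comparison_test'[OF assms(2), where N = 0]) (use assms(1) in auto)
  then have "(\<lambda>n. \<Sum>m<n. u m x) \<longlonglongrightarrow> (\<Sum>m. u m x)"
    by (simp add: summable_LIMSEQ)
  ultimately have "((\<lambda>y. \<Sum>m. u m y) \<longlongrightarrow> (\<Sum>m. u m x)) (at x)"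
    by (intro swap_uniform_limit) auto
  then show ?thesis
    by (simp add: isCont_def)
qed

lemma LIMSEQ_divide_Suc_times_pi: "(\<lambda>j. c / (real (Suc j) * pi)) \<longlonglongrightarrow> 0"
proof -
  have "(\<lambda>j. (c / pi) * inverse (real (Suc j))) \<longlonglongrightarrow> (c / pi) * 0"
    by (intro tendsto_mult tendsto_const LIMSEQ_inverse_real_of_nat)
  then show ?thesis
    by (simp add: divide_inverse mult.commute mult.left_commute del: of_nat_Suc)
qed

locale sin_series =
  fixes q :: "nat \<Rightarrow> real" and fn :: "nat \<Rightarrow> real \<Rightarrow> real" and f :: "real \<Rightarrow> real"
  assumes q_enum: "bij_betw q {1..} (\<rat> \<inter> {0..1})"
    and fn_def: "\<And>n x. fn n x = (if x = q n then 0 else sin (1 / (x - q n)))"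
    and f_def: "\<And>x. f x = (\<Sum>n. (1/2) ^ (n + 1) * fn (n + 1) x)"
begin

lemma q_in: "n \<ge> 1 \<Longrightarrow> q n \<in> \<rat> \<inter> {0..1}"
  using q_enum by (auto simp: bij_betw_def)

lemma q_inj: "n \<ge> 1 \<Longrightarrow> m \<ge> 1 \<Longrightarrow> q n = q m \<Longrightarrow> n = m"
  using q_enum by (auto simp: bij_betw_def inj_on_def)

lemma q_surj: "x \<in> \<rat> \<inter> {0..1} \<Longrightarrow> \<exists>n\<ge>1. q n = x"
  using q_enum by (force simp: bij_betw_def)

lemma fn_bound: "\<bar>fn n x\<bar> \<le> 1"
  by (simp add: fn_def)

lemma fn_shift: "d \<noteq> 0 \<Longrightarrow> fn n (q n + d) = sin (1 / d)"
  by (simp add: fn_def)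

lemma isCont_fn: "x \<noteq> q n \<Longrightarrow> isCont (fn n) x"
proof -
  assume "x \<noteq> q n"
  then have "\<forall>\<^sub>F y in nhds x. y \<noteq> q n"
    by (rule t1_space_nhds)
  then have "\<forall>\<^sub>F y in nhds x. fn n y = sin (1 / (y - q n))"
    by eventually_elim (simp add: fn_def)
  moreover have "isCont (\<lambda>y. sin (1 / (y - q n))) x"
    using \<open>x \<noteq> q n\<close> by (intro continuous_intros) auto
  ultimately show ?thesis
    using \<open>x \<noteq> q n\<close> by (simp add: isCont_cong fn_def)
qed

lemma summable_halves: "summable (\<lambda>m. (1/2::real) ^ (m + 1))"
  by (simp add: summable_geometric)

lemma term_bound: "\<bar>(1/2::real) ^ (m + 1) * fn (m + 1) y\<bar> \<le> (1/2) ^ (m + 1)"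
  using fn_bound[of "m + 1" y] by (simp add: abs_mult mult_left_le)

definition f_omit :: "nat \<Rightarrow> real \<Rightarrow> real" where
  "f_omit k y = (\<Sum>m. if m + 1 = k then 0 else (1/2) ^ (m + 1) * fn (m + 1) y)"

lemma f_omit_0: "f_omit 0 = f"
  by (simp add: fun_eq_iff f_omit_def f_def)

lemma isCont_f_omit:
  assumes "\<And>n. n \<ge> 1 \<Longrightarrow> n \<noteq> k \<Longrightarrow> x \<noteq> q n"
  shows "isCont (f_omit k) x"
  unfolding f_omit_def[abs_def]
proof (rule isCont_suminf_bounded[OF _ summable_halves])
  show "\<bar>if m + 1 = k then 0 else (1/2::real) ^ (m + 1) * fn (m + 1) y\<bar> \<le> (1/2) ^ (m + 1)" for m y
    using term_bound[of m y] by simp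
  show "isCont (\<lambda>y. if m + 1 = k then 0 else (1/2) ^ (m + 1) * fn (m + 1) y) x" for m
    using assms[of "m + 1"] by (cases "m + 1 = k") (auto intro!: continuous_intros isCont_fn)
qed

lemma f_eq_f_omit:
  assumes "k \<ge> 1"
  shows "f y = f_omit k y + (1/2) ^ k * fn k y"
proof -
  let ?t = "\<lambda>m. (1/2::real) ^ (m + 1) * fn (m + 1) y"
  have summable_omit: "summable (\<lambda>m. if m + 1 = k then 0 else ?t m)"
    by (rule summable_comparison_test'[OF summable_halves, where N = 0]) (use term_bound in simp)
  have single: "(\<lambda>m. if m = k - 1 then ?t m else 0) sums ?t (k - 1)"
    by (rule sums_single)
  have "?t = (\<lambda>m. (if m + 1 = k then 0 else ?t m) + (if m = k - 1 then ?t m else 0))"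
    using assms by (auto simp: fun_eq_iff)
  then have "(\<Sum>m. ?t m) = (\<Sum>m. (if m + 1 = k then 0 else ?t m) + (if m = k - 1 then ?t m else 0))"
    by (rule arg_cong)
  also have "\<dots> = f_omit k y + ?t (k - 1)"
    using suminf_add[OF summable_omit sums_summable[OF single]] sums_unique[OF single]
    unfolding f_omit_def by simp
  finally have "(\<Sum>m. ?t m) = f_omit k y + ?t (k - 1)" .
  then show ?thesis
    using assms by (simp add: f_def)
qed

lemma isCont_f: "(\<And>n. n \<ge> 1 \<Longrightarrow> x \<noteq> q n) \<Longrightarrow> isCont f x"
  using isCont_f_omit[of 0 x] by (simp add: f_omit_0)

lemma f_bound: "\<bar>f x\<bar> \<le> 1"
proof -
  have "\<bar>f x\<bar> \<le> (\<Sum>m. \<bar>(1/2::real) ^ (m + 1) * fn (m + 1) x\<bar>)"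
    unfolding f_def using term_bound
    by (intro summable_rabs summable_comparison_test'[OF summable_halves, where N = 0]) auto
  also have "\<dots> \<le> (\<Sum>m. (1/2::real) ^ (m + 1))"
    using term_bound
    by (intro suminf_le summable_halves summable_comparison_test'[OF summable_halves, where N = 0]) auto
  also have "\<dots> = 1"
  proof -
    have "(\<lambda>m. (1/2) * (1/2::real) ^ m) sums ((1/2) * 2)"
      using geometric_sums[of "1/2::real"] by (intro sums_mult) simp
    then show ?thesis
      by (simp add: sums_iff)
  qed
  finally show ?thesis .
qed

lemma f_tendsto_along_zeros:
  assumes "c \<in> {-1, 1}"
  shows "(\<lambda>j. f (x + c / (real (Suc j) * pi))) \<longlonglongrightarrow> f x"
proof -
  let ?d = "\<lambda>j. c / (real (Suc j) * pi)"
  \<comment> \<open>At \<open>x = q k\<close> the \<open>k\<close>-th summand vanishes at \<open>x + ?d j\<close> and the other summands are continuous at \<open>x\<close>.\<close>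
  have lim: "(\<lambda>j. x + ?d j) \<longlonglongrightarrow> x"
    using tendsto_add[OF tendsto_const LIMSEQ_divide_Suc_times_pi] by simp
  obtain g where g: "isCont g x" "g x = f x" "\<And>j. f (x + ?d j) = g (x + ?d j)"
  proof (cases "x \<in> \<rat> \<inter> {0..1}")
    case True
    then obtain k where k: "k \<ge> 1" "q k = x"
      using q_surj by blast
    have "fn k (x + ?d j) = 0" for j
      using fn_shift[of "?d j" k] k(2) assms by (auto simp del: of_nat_Suc)
    moreover have "isCont (f_omit k) x"
      using k q_inj by (intro isCont_f_omit) blast
    ultimately show ?thesis
      using that[of "f_omit k"] f_eq_f_omit[OF k(1)] k(2) by (simp add: fn_def)
  next
    case False
    then have "isCont f x"
      using q_in by (intro isCont_f) blast
    then show ?thesis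
      using that by blast
  qed
  show ?thesis
    using isCont_tendsto_compose[OF g(1) lim] g(2,3) by simp
qed

lemma f_frequently_close_at_left:
  assumes "e > 0"
  shows "\<exists>\<^sub>F y in at_left x. dist (f y) (f x) < e"
proof (rule frequently_if_filterlim_sequentially)
  let ?s = "\<lambda>j. x + -1 / (real (Suc j) * pi)"
  show "filterlim ?s (at_left x) sequentially"
  proof (rule tendsto_imp_filterlim_at_left)
    show "?s \<longlonglongrightarrow> x"
      using tendsto_add[OF tendsto_const[of x] LIMSEQ_divide_Suc_times_pi[of "-1"]] by simp
    have "\<forall>j. ?s j < x"
    proof
      fix j
      have "0 < real (Suc j) * pi"
        by (simp del: of_nat_Suc)
      then show "?s j < x"
        by (simp add: divide_neg_pos del: of_nat_Suc)
    qed
    then show "\<forall>\<^sub>F j in sequentially. ?s j < x"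
      by (rule always_eventually)
  qed
  have "(\<lambda>j. f (?s j)) \<longlonglongrightarrow> f x"
    by (rule f_tendsto_along_zeros) simp
  then show "\<forall>\<^sub>F j in sequentially. dist (f (?s j)) (f x) < e"
    using assms by (rule tendstoD)
qed

lemma f_frequently_close_at_right:
  assumes "e > 0"
  shows "\<exists>\<^sub>F y in at_right x. dist (f y) (f x) < e"
proof (rule frequently_if_filterlim_sequentially)
  let ?s = "\<lambda>j. x + 1 / (real (Suc j) * pi)"
  show "filterlim ?s (at_right x) sequentially"
  proof (rule tendsto_imp_filterlim_at_right)
    show "?s \<longlonglongrightarrow> x"
      using tendsto_add[OF tendsto_const[of x] LIMSEQ_divide_Suc_times_pi[of "1"]] by simp
    have "\<forall>j. ?s j > x"
    proof
      fix j
      have "0 < real (Suc j) * pi"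
        by (simp del: of_nat_Suc)
      then show "?s j > x"
        by (simp del: of_nat_Suc)
    qed
    then show "\<forall>\<^sub>F j in sequentially. ?s j > x"
      by (rule always_eventually)
  qed
  have "(\<lambda>j. f (?s j)) \<longlonglongrightarrow> f x"
    by (rule f_tendsto_along_zeros) simp
  then show "\<forall>\<^sub>F j in sequentially. dist (f (?s j)) (f x) < e"
    using assms by (rule tendstoD)
qed

lemma f_jump_at_q:
  assumes "k \<ge> 1"
  obtains s where "s \<longlonglongrightarrow> q k" "(\<lambda>j. f (s j)) \<longlonglongrightarrow> f (q k) + (1/2) ^ k"
proof -
  let ?d = "\<lambda>j. inverse (pi/2 + 2 * real j * pi)"
  have "real j \<le> pi/2 + 2 * real j * pi" for j
    using pi_gt3 mult_nonneg_nonneg[of "real j" "2 * pi - 1"] by (simp add: algebra_simps)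
  then have "filterlim (\<lambda>j. pi/2 + 2 * real j * pi) at_top sequentially"
    by (intro filterlim_at_top_mono[OF filterlim_real_sequentially] always_eventually) auto
  then have peaks: "(\<lambda>j. q k + ?d j) \<longlonglongrightarrow> q k"
    using tendsto_add[OF tendsto_const[of "q k"] tendsto_inverse_0_at_top] by simp
  moreover have "isCont (f_omit k) (q k)"
    using assms q_inj by (intro isCont_f_omit) blast
  ultimately have "(\<lambda>j. f_omit k (q k + ?d j)) \<longlonglongrightarrow> f_omit k (q k)"
    by (rule isCont_tendsto_compose[rotated])
  then have "(\<lambda>j. f_omit k (q k + ?d j) + (1/2) ^ k) \<longlonglongrightarrow> f_omit k (q k) + (1/2) ^ k"
    by (rule tendsto_add[OF _ tendsto_const])
  moreover have "fn k (q k + ?d j) = 1" for j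
  proof -
    have "0 < pi/2 + 2 * real j * pi"
      by (simp add: add_pos_nonneg)
    then have "?d j \<noteq> 0"
      by simp
    moreover have "1 / ?d j = pi/2 + 2 * real j * pi"
      by (simp only: divide_inverse inverse_inverse_eq mult_1_left)
    ultimately have "fn k (q k + ?d j) = sin (pi/2 + 2 * real j * pi)"
      using fn_shift by metis
    then show ?thesis
      by (simp add: sin_add)
  qed
  moreover have "f (q k) = f_omit k (q k)"
    using f_eq_f_omit[OF assms, of "q k"] by (simp add: fn_def)
  ultimately have "(\<lambda>j. f (q k + ?d j)) \<longlonglongrightarrow> f (q k) + (1/2) ^ k"
    using f_eq_f_omit[OF assms] by simp
  with peaks show ?thesis
    using that by blast
qed

lemma connected_graph: "connected ((\<lambda>x. (x, f x)) ` {0..1})"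
proof (rule connected_graph_if_continuous_off_countable[OF countable_rat])
  show "isCont f x" if "x \<in> {0..1} - \<rat>" for x
    using that q_in by (intro isCont_f) blast
  show "\<exists>\<^sub>F y in at_left x. dist (f y) (f x) < e" if "e > 0" for x e
    using that by (rule f_frequently_close_at_left)
  show "\<exists>\<^sub>F y in at_right x. dist (f y) (f x) < e" if "e > 0" for x e
    using that by (rule f_frequently_close_at_right)
qed

lemma graph_subset: "(\<lambda>x. (x, f x)) ` {0..1} \<subseteq> {0..1} \<times> {-1..1}"
  using f_bound by (auto simp: abs_le_iff)

lemma subtopology_graph:
  "subtopology (top_of_set ({0..1} \<times> {-1..1})) ((\<lambda>x. (x, f x)) ` {0..1}) = top_of_set ((\<lambda>x. (x, f x)) ` {0..1})"
  using graph_subset by (simp add: subtopology_subtopology Int_absorb1)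

lemma H1_retract_graph: "H1_retract (top_of_set ({0..1} \<times> {-1..1})) ((\<lambda>x. (x, f x)) ` {0..1})"
proof -
  let ?X = "{0..1::real} \<times> {-1..1::real}" and ?E = "(\<lambda>x. (x, f x)) ` {0..1::real}"
  let ?r = "\<lambda>p::real \<times> real. (fst p, f (fst p))"
  let ?L = "(\<lambda>c::real. {c} \<times> (UNIV :: real set)) ` \<rat>"
  have "lebesgue_one_map (top_of_set ?X) (top_of_set ?E) ?r"
  proof (rule lebesgue_one_map_if_continuous_off_pieces[where \<D> = ?L])
    show "?r ` ?X \<subseteq> ?E"
      by auto
    show "countable ?L"
      by (simp add: countable_rat)
    show "continuous (at p within ?X) ?r" if "p \<in> ?X - \<Union>?L" for p
    proof -
      have "isCont f (fst p)"
        using that q_in by (intro isCont_f) (auto simp: mem_Times_iff)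
      then have "isCont (\<lambda>p. f (fst p)) p"
        by (rule isCont_o2[OF isCont_fst[OF continuous_ident]])
      then have "isCont ?r p"
        by (rule continuous_Pair[OF isCont_fst[OF continuous_ident]])
      then show ?thesis
        by (rule continuous_at_imp_continuous_at_within)
    qed
    show "closed D" if "D \<in> ?L" for D
      using that by (auto intro!: closed_Times closed_singleton)
    show "?r p = ?r p'" if "D \<in> ?L" "p \<in> D \<inter> ?X" "p' \<in> D \<inter> ?X" for D p p'
      using that by auto
  qed
  then show ?thesis
    unfolding H1_retract_def subtopology_graph using graph_subset by auto
qed

lemma continuous_map_into_graph_constant:
  fixes g :: "real \<times> real \<Rightarrow> real \<times> real"
  assumes "continuous_map (top_of_set ({0..1} \<times> {-1..1}))
      (subtopology (top_of_set ({0..1} \<times> {-1..1})) ((\<lambda>x. (x, f x)) ` {0..1})) g"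
    and "p \<in> {0..1} \<times> {-1..1}" "p' \<in> {0..1} \<times> {-1..1}"
  shows "g p = g p'"
proof (rule graph_points_eq_if_compact_connected)
  let ?X = "{0..1::real} \<times> {-1..1::real}"
  have "continuous_on ?X g" "g ` ?X \<subseteq> (\<lambda>x. (x, f x)) ` {0..1}"
    using assms(1) by (simp_all add: subtopology_graph image_subset_iff_funcset)
  then show "compact (g ` ?X)" "connected (g ` ?X)" "g ` ?X \<subseteq> (\<lambda>x. (x, f x)) ` {0..1}"
    by (auto intro: compact_continuous_image connected_continuous_image compact_Times
        convex_connected convex_Times)
  show "\<exists>c s L. a < c \<and> c < b \<and> s \<longlonglongrightarrow> c \<and> (\<lambda>j. f (s j)) \<longlonglongrightarrow> L \<and> L \<noteq> f c"
    if ab: "a \<in> {0..1}" "b \<in> {0..1}" "a < b" for a b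
  proof -
    obtain c where c: "c \<in> \<rat>" "a < c" "c < b"
      using Rats_dense_in_real[OF \<open>a < b\<close>] by blast
    moreover obtain k where "k \<ge> 1" "q k = c"
      using q_surj[of c] ab c by auto
    moreover obtain s where "s \<longlonglongrightarrow> q k" "(\<lambda>j. f (s j)) \<longlonglongrightarrow> f (q k) + (1/2) ^ k"
      using f_jump_at_q[OF \<open>k \<ge> 1\<close>] by blast
    ultimately show ?thesis
      by force
  qed
qed (use assms in auto)

lemma not_B1_retract_graph: "\<not> B1_retract (top_of_set ({0..1} \<times> {-1..1})) ((\<lambda>x. (x, f x)) ` {0..1})"
proof (rule not_B1_retract_if_continuous_maps_constant)
  show "Hausdorff_space (top_of_set ({0..1::real} \<times> {-1..1::real}))"
    by (rule Hausdorff_space_subtopology[OF Hausdorff_space_euclidean])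
  show "(0, f 0) \<in> (\<lambda>x. (x, f x)) ` {0..1}" "(1, f 1) \<in> (\<lambda>x. (x, f x)) ` {0..1}" "(0::real, f 0) \<noteq> (1, f 1)"
    by auto
  show "g (0, f 0) = g (1, f 1)"
    if "continuous_map (top_of_set ({0..1} \<times> {-1..1}))
      (subtopology (top_of_set ({0..1} \<times> {-1..1})) ((\<lambda>x. (x, f x)) ` {0..1})) g"
    for g :: "real \<times> real \<Rightarrow> real \<times> real"
    using f_bound by (intro continuous_map_into_graph_constant[OF that]) (auto simp: abs_le_iff)
qed

end

theorem mainTheorem9:
  fixes q :: "nat \<Rightarrow> real" and fn :: "nat \<Rightarrow> real \<Rightarrow> real" and f :: "real \<Rightarrow> real"
    and X E :: "(real \<times> real) set"
  assumes q_enum: "bij_betw q {1..} (\<rat> \<inter> {0..1})"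
    and fn_def: "\<And>n x. fn n x = (if x = q n then 0 else sin (1 / (x - q n)))"
    and f_def: "\<And>x. f x = (\<Sum>n. (1/2) ^ (n + 1) * fn (n + 1) x)"
    and X_def: "X = {0..1} \<times> {-1..1}"
    and E_def: "E = {(x, y) \<in> X. y = f x}"
  shows "connected E \<and> H1_retract (top_of_set X) E \<and> \<not> B1_retract (top_of_set X) E"
proof -
  interpret sin_series q fn f
    using q_enum fn_def f_def by unfold_locales
  have "E = (\<lambda>x. (x, f x)) ` {0..1}"
    using graph_subset unfolding E_def X_def by auto
  then show ?thesis
    using connected_graph H1_retract_graph not_B1_retract_graph X_def by simp
qed

end
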